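(* Let $D>0$, let $(L,\mathbf N)$ be an architecture with $N_0=d$ and width $W=\max_\ell N_\ell$, let $q\in[1,\infty]$, $r\ge1$, $c:=Dd^{1/q}+1$, and let $0<\varepsilon<cL^2(2r)^{L-1}$. Let $0<\eta\le\varepsilon\,(cWL^2(2r)^{L-1})^{-1}$ and let $Q:\Theta_{L,\mathbf N}\to\Theta_{L,\mathbf N}$ satisfy $\|Q(\theta)-\theta\|_\infty\le\eta$ for all $\theta\in\Theta^q_{L,\mathbf N}(r)$. Then $$\max_{\theta\in\Theta^q_{L,\mathbf N}(r)}\ \max_{x\in[-D,D]^d}\|R_\theta(x)-R_{Q(\theta)}(x)\|_q\le\varepsilon.$$
   Context: ReLU $\rho(x)=\max(0,x)$ coordinatewise. Architecture $(L,\mathbf N)$, $\mathbf N=(N_0,\dots,N_L)$; parameters $\theta=(W_1,\dots,W_L,b_1,\dots,b_L)$, $W_\ell\in\mathbb R^{N_\ell\times N_{\ell-1}}$, $b_\ell\in\mathbb R^{N_\ell}$, forming $\Theta_{L,\mathbf N}$; $\|\theta\|_\infty$ = max absolute value of coordinates. Realization: $R_\theta(x)=W_Ly_{L-1}(x)+b_L$, $y_0=x$, $y_\ell=\rho(W_\ell y_{\ell-1}+b_\ell)$, $1\le\ell\le L-1$. $\|M\|_{q\to q}$ is the operator norm induced by $\|\cdot\|_q$. $\Theta^q_{L,\mathbf N}(r)=\{\theta:\|W_\ell\|_{q\to q}\le r,\ \|b_\ell\|_q\le r\ \forall\ell\}$. $d^{1/\infty}:=1$. *)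

theory Defs
  imports "HOL-Analysis.Analysis"
begin

text \<open>Vectors of length n are functions nat => real, only indices i < n matter.
  The exponent q ranges over [1, infinity], encoded as an extended real.\<close>

definition qnorm :: "ereal \<Rightarrow> nat \<Rightarrow> (nat \<Rightarrow> real) \<Rightarrow> real" where
  "qnorm q n v = (if q = \<infinity> then Max (insert 0 {\<bar>v i\<bar> | i. i < n})
     else (\<Sum>i<n. \<bar>v i\<bar> powr real_of_ereal q) powr (1 / real_of_ereal q))"

definition mat_vec :: "nat \<Rightarrow> (nat \<Rightarrow> nat \<Rightarrow> real) \<Rightarrow> (nat \<Rightarrow> real) \<Rightarrow> (nat \<Rightarrow> real)" where
  "mat_vec n M x = (\<lambda>i. \<Sum>j<n. M i j * x j)"

definition opnorm :: "ereal \<Rightarrow> nat \<Rightarrow> nat \<Rightarrow> (nat \<Rightarrow> nat \<Rightarrow> real) \<Rightarrow> real" where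
  "opnorm q m n M = Sup {qnorm q m (mat_vec n M x) | x. qnorm q n x \<le> 1}"

definition root_q :: "real \<Rightarrow> ereal \<Rightarrow> real" where
  "root_q d q = (if q = \<infinity> then 1 else d powr (1 / real_of_ereal q))"

text \<open>Parameters: (W, b) with W l the weight matrix of layer l (rows < N l, columns < N (l-1))
  and b l the bias of layer l (entries < N l), for layers l = 1..L.\<close>
type_synonym params = "(nat \<Rightarrow> nat \<Rightarrow> nat \<Rightarrow> real) \<times> (nat \<Rightarrow> nat \<Rightarrow> real)"

text \<open>The parameter space Theta_{L,N}: entries outside the index ranges are fixed to 0,
  so that elements correspond bijectively to tuples of matrices and vectors.\<close>
definition Params :: "nat \<Rightarrow> (nat \<Rightarrow> nat) \<Rightarrow> params set" where
  "Params L N = {(W, b). (\<forall>l i j. (l \<in> {1..L} \<and> i < N l \<and> j < N (l - 1)) \<or> W l i j = 0)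
                       \<and> (\<forall>l i. (l \<in> {1..L} \<and> i < N l) \<or> b l i = 0)}"

definition param_supnorm :: "nat \<Rightarrow> (nat \<Rightarrow> nat) \<Rightarrow> params \<Rightarrow> real" where
  "param_supnorm L N \<theta> = Max (insert 0
     ({\<bar>fst \<theta> l i j\<bar> | l i j. l \<in> {1..L} \<and> i < N l \<and> j < N (l - 1)}
      \<union> {\<bar>snd \<theta> l i\<bar> | l i. l \<in> {1..L} \<and> i < N l}))"

definition param_diff :: "params \<Rightarrow> params \<Rightarrow> params" where
  "param_diff \<theta> \<theta>' = ((\<lambda>l i j. fst \<theta> l i j - fst \<theta>' l i j), (\<lambda>l i. snd \<theta> l i - snd \<theta>' l i))"

definition ParamBall :: "ereal \<Rightarrow> nat \<Rightarrow> (nat \<Rightarrow> nat) \<Rightarrow> real \<Rightarrow> params set" where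
  "ParamBall q L N r = {\<theta> \<in> Params L N. \<forall>l \<in> {1..L}.
      opnorm q (N l) (N (l - 1)) (fst \<theta> l) \<le> r \<and> qnorm q (N l) (snd \<theta> l) \<le> r}"

definition relu :: "real \<Rightarrow> real" where "relu t = max 0 t"

fun hidden :: "(nat \<Rightarrow> nat) \<Rightarrow> params \<Rightarrow> nat \<Rightarrow> (nat \<Rightarrow> real) \<Rightarrow> (nat \<Rightarrow> real)" where
  "hidden N \<theta> 0 x = x"
| "hidden N \<theta> (Suc l) x =
     (\<lambda>i. relu (mat_vec (N l) (fst \<theta> (Suc l)) (hidden N \<theta> l x) i + snd \<theta> (Suc l) i))"

definition realization :: "nat \<Rightarrow> (nat \<Rightarrow> nat) \<Rightarrow> params \<Rightarrow> (nat \<Rightarrow> real) \<Rightarrow> (nat \<Rightarrow> real)" where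
  "realization L N \<theta> x =
     (\<lambda>i. mat_vec (N (L - 1)) (fst \<theta> L) (hidden N \<theta> (L - 1) x) i + snd \<theta> L i)"

end

theory Submission
  imports Defs
begin

text \<open>Let \<open>y_k\<close> and \<open>y'_k\<close> be the hidden activations of \<open>\<theta>\<close> and of \<open>Q \<theta>\<close>, and
  \<open>\<delta> = \<eta> W\<close>. By the power mean inequality, an entrywise perturbation of size \<open>\<eta>\<close> of a
  matrix with at most \<open>W\<close> rows and columns has \<open>q\<close>-operator norm at most \<open>\<delta>\<close>; likewise a
  perturbed bias moves by at most \<open>\<delta>\<close>. As every layer of \<open>\<theta>\<close> is affine with norms bounded
  by \<open>r\<close> and ReLU is 1-Lipschitz, the sizes \<open>a_k = \<parallel>y_k\<parallel>\<close> and errors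
  \<open>e_k = \<parallel>y_k - y'_k\<parallel>\<close> obey \<open>a_(k+1) \<le> r a_k + r\<close> and
  \<open>e_(k+1) \<le> r e_k + \<delta> (a_k + e_k) + \<delta>\<close>, with \<open>a_0 \<le> D d^(1/q)\<close> and \<open>e_0 = 0\<close>.
  Induction yields \<open>a_k \<le> r^k (c + k) - 1\<close> and \<open>e_k \<le> \<delta> c k^2 (2r)^(k-1)\<close>, so the output
  error is at most \<open>\<delta> c L^2 (2r)^(L-1) \<le> \<epsilon>\<close>. The bound \<open>\<epsilon> < c L^2 (2r)^(L-1)\<close> forces
  \<open>\<delta> \<le> 1\<close>, which is what allows \<open>\<delta> e_k\<close> to be absorbed into \<open>r e_k\<close>.\<close>

section \<open>Finite \<open>p\<close>-norms\<close>

definition pnorm :: "real \<Rightarrow> nat \<Rightarrow> (nat \<Rightarrow> real) \<Rightarrow> real" where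
  "pnorm p n v = (\<Sum>i<n. \<bar>v i\<bar> powr p) powr (1 / p)"

lemma pnorm_nonneg: "pnorm p n v \<ge> 0"
  by (simp add: pnorm_def)

lemma powr_powr_inverse: "p \<ge> 1 \<Longrightarrow> (x::real) \<ge> 0 \<Longrightarrow> (x powr p) powr (1 / p) = x"
  by (simp add: powr_powr)

lemma pnorm_powr: "p \<ge> 1 \<Longrightarrow> pnorm p n v powr p = (\<Sum>i<n. \<bar>v i\<bar> powr p)"
  unfolding pnorm_def by (simp add: powr_powr sum_nonneg)

lemma abs_le_pnorm:
  assumes "p \<ge> 1" "i < n"
  shows "\<bar>v i\<bar> \<le> pnorm p n v"
proof -
  have "\<bar>v i\<bar> powr p \<le> (\<Sum>i<n. \<bar>v i\<bar> powr p)"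
    by (rule member_le_sum) (use assms in auto)
  then have "(\<bar>v i\<bar> powr p) powr (1 / p) \<le> pnorm p n v"
    unfolding pnorm_def using assms by (intro powr_mono2) auto
  with assms show ?thesis
    by (simp add: powr_powr_inverse)
qed

lemma pnorm_mono:
  assumes "p \<ge> 1" "\<And>i. i < n \<Longrightarrow> \<bar>u i\<bar> \<le> \<bar>v i\<bar>"
  shows "pnorm p n u \<le> pnorm p n v"
  unfolding pnorm_def
  by (rule powr_mono2) (use assms in \<open>auto intro!: sum_mono powr_mono2 sum_nonneg\<close>)

lemma pnorm_le_const:
  assumes "p \<ge> 1" "M \<ge> 0" "\<And>i. i < n \<Longrightarrow> \<bar>v i\<bar> \<le> M"
  shows "pnorm p n v \<le> real n powr (1 / p) * M"
proof -
  have "(\<Sum>i<n. \<bar>v i\<bar> powr p) \<le> (\<Sum>i<n. M powr p)"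
    by (intro sum_mono powr_mono2) (use assms in auto)
  then have "pnorm p n v \<le> (real n * M powr p) powr (1 / p)"
    unfolding pnorm_def by (intro powr_mono2) (use assms in \<open>auto intro!: sum_nonneg\<close>)
  also have "\<dots> = real n powr (1 / p) * M"
    using assms by (simp add: powr_mult powr_powr_inverse)
  finally show ?thesis .
qed

lemma pnorm_scale:
  assumes "p \<ge> 1"
  shows "pnorm p n (\<lambda>i. a * v i) = \<bar>a\<bar> * pnorm p n v"
proof -
  have "(\<Sum>i<n. \<bar>a * v i\<bar> powr p) = \<bar>a\<bar> powr p * (\<Sum>i<n. \<bar>v i\<bar> powr p)"
    by (simp add: abs_mult powr_mult sum_distrib_left)
  with assms show ?thesis
    unfolding pnorm_def by (simp add: powr_mult powr_powr_inverse sum_nonneg)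
qed

lemma convex_on_powr_nonneg:
  assumes "p \<ge> 1"
  shows "convex_on {0..} (\<lambda>x::real. x powr p)"
proof (rule convex_on_linorderI)
  fix t x y :: real
  assume t: "0 < t" "t < 1" and xy: "x \<in> {0..}" "y \<in> {0..}" "x < y"
  show "((1 - t) *\<^sub>R x + t *\<^sub>R y) powr p \<le> (1 - t) * x powr p + t * y powr p"
  proof (cases "x = 0")
    case True
    have "t powr p \<le> t powr 1"
      using t assms by (intro powr_mono') auto
    then have "t powr p * y powr p \<le> t * y powr p"
      using t by (intro mult_right_mono) auto
    with True t xy show ?thesis
      by (simp add: powr_mult)
  next
    case False
    with convex_onD[OF powr_convex[OF assms], of t x y] t xy show ?thesis
      by auto
  qed
qed auto

lemma pnorm_eq_0_imp: "p \<ge> 1 \<Longrightarrow> pnorm p n u = 0 \<Longrightarrow> i < n \<Longrightarrow> u i = 0"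
  using abs_le_pnorm[of p i n u] by simp

lemma sum_powr_normalized:
  assumes "p \<ge> 1" "pnorm p n u > 0"
  shows "(\<Sum>i<n. (\<bar>u i\<bar> / pnorm p n u) powr p) = 1"
proof -
  have "(\<Sum>i<n. \<bar>u i\<bar> powr p) = pnorm p n u powr p"
    using pnorm_powr[OF assms(1)] by simp
  moreover have "pnorm p n u powr p > 0"
    using assms by simp
  ultimately show ?thesis
    by (simp add: powr_divide sum_divide_distrib[symmetric])
qed

text \<open>Minkowski's inequality, via convexity of \<open>t \<mapsto> t\<^sup>p\<close> applied to the vectors normalised
  to unit norm.\<close>
lemma pnorm_triangle:
  assumes p: "p \<ge> 1"
  shows "pnorm p n (\<lambda>i. u i + v i) \<le> pnorm p n u + pnorm p n v"
proof -
  define a b where "a = pnorm p n u" and "b = pnorm p n v"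
  have "a \<ge> 0" "b \<ge> 0"
    by (simp_all add: a_def b_def pnorm_nonneg)
  then consider "a = 0" | "b = 0" | "a > 0" "b > 0"
    by force
  then show ?thesis
  proof cases
    case 1
    then have "pnorm p n (\<lambda>i. u i + v i) \<le> b"
      using pnorm_eq_0_imp[OF p, of n u] unfolding b_def by (intro pnorm_mono[OF p]) (auto simp: a_def)
    with 1 show ?thesis by (simp add: a_def b_def)
  next
    case 2
    then have "pnorm p n (\<lambda>i. u i + v i) \<le> a"
      using pnorm_eq_0_imp[OF p, of n v] unfolding a_def by (intro pnorm_mono[OF p]) (auto simp: b_def)
    with 2 show ?thesis by (simp add: a_def b_def)
  next
    case 3
    define s t where "s = a + b" and "t = b / s"
    have s: "s > 0" and t: "0 \<le> t" "t \<le> 1" "1 - t = a / s"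
      using 3 by (auto simp: s_def t_def field_simps)
    have pointwise: "(\<bar>u i + v i\<bar> / s) powr p
        \<le> (1 - t) * (\<bar>u i\<bar> / a) powr p + t * (\<bar>v i\<bar> / b) powr p" for i
    proof -
      have "\<bar>u i + v i\<bar> / s \<le> (1 - t) * (\<bar>u i\<bar> / a) + t * (\<bar>v i\<bar> / b)"
        using 3 s t by (simp add: t_def divide_right_mono abs_triangle_ineq
            add_divide_distrib[symmetric])
      then have "(\<bar>u i + v i\<bar> / s) powr p \<le> ((1 - t) * (\<bar>u i\<bar> / a) + t * (\<bar>v i\<bar> / b)) powr p"
        using p s by (intro powr_mono2) auto
      also have "\<dots> \<le> (1 - t) * (\<bar>u i\<bar> / a) powr p + t * (\<bar>v i\<bar> / b) powr p"
        using convex_onD[OF convex_on_powr_nonneg[OF p], of t "\<bar>u i\<bar> / a" "\<bar>v i\<bar> / b"] t 3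
        by simp
      finally show ?thesis .
    qed
    have "(\<Sum>i<n. (\<bar>u i + v i\<bar> / s) powr p)
        \<le> (\<Sum>i<n. (1 - t) * (\<bar>u i\<bar> / a) powr p + t * (\<bar>v i\<bar> / b) powr p)"
      by (rule sum_mono) (rule pointwise)
    also have "\<dots> = (1 - t) * (\<Sum>i<n. (\<bar>u i\<bar> / a) powr p) + t * (\<Sum>i<n. (\<bar>v i\<bar> / b) powr p)"
      by (simp add: sum.distrib sum_distrib_left)
    also have "\<dots> = 1"
      using sum_powr_normalized[OF p, of n u] sum_powr_normalized[OF p, of n v] 3
      by (simp add: a_def b_def)
    finally have "(\<Sum>i<n. \<bar>u i + v i\<bar> powr p) \<le> s powr p"
      using s by (simp add: powr_divide sum_divide_distrib[symmetric])
    then have "pnorm p n (\<lambda>i. u i + v i) \<le> (s powr p) powr (1 / p)"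
      unfolding pnorm_def using p by (intro powr_mono2) (auto intro: sum_nonneg)
    with p s show ?thesis
      by (simp add: powr_powr_inverse s_def a_def b_def)
  qed
qed

text \<open>The power mean inequality \<open>(\<Sum>|x\<^sub>i|/n)\<^sup>p \<le> \<Sum>|x\<^sub>i|\<^sup>p/n\<close>, rearranged.\<close>
lemma sum_abs_le_pnorm:
  assumes p: "p \<ge> 1"
  shows "real n powr (1 / p) * (\<Sum>i<n. \<bar>x i\<bar>) \<le> real n * pnorm p n x"
proof (cases "n = 0")
  case False
  then have n: "real n > 0" by simp
  have "(\<Sum>i<n. (1 / real n) * \<bar>x i\<bar>) powr p \<le> (\<Sum>i<n. (1 / real n) * \<bar>x i\<bar> powr p)"
    using convex_on_sum[OF _ _ convex_on_powr_nonneg[OF p], of "{..<n}" "\<lambda>_. 1 / real n"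
        "\<lambda>i. \<bar>x i\<bar>"] False
    by (simp add: lessThan_empty_iff)
  then have "((\<Sum>i<n. \<bar>x i\<bar>) / real n) powr p \<le> (\<Sum>i<n. \<bar>x i\<bar> powr p) / real n"
    by (simp add: sum_distrib_left[symmetric] sum_divide_distrib[symmetric])
  then have "(((\<Sum>i<n. \<bar>x i\<bar>) / real n) powr p) powr (1 / p)
      \<le> ((\<Sum>i<n. \<bar>x i\<bar> powr p) / real n) powr (1 / p)"
    using p by (intro powr_mono2) (auto intro: sum_nonneg)
  then have "(\<Sum>i<n. \<bar>x i\<bar>) / real n \<le> pnorm p n x / real n powr (1 / p)"
    using p n by (simp add: powr_powr_inverse sum_nonneg powr_divide pnorm_def)
  with n show ?thesis
    by (simp add: field_simps)
qed simp

definition maxnorm :: "nat \<Rightarrow> (nat \<Rightarrow> real) \<Rightarrow> real" where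
  "maxnorm n v = Max (insert 0 ((\<lambda>i. \<bar>v i\<bar>) ` {..<n}))"

lemma maxnorm_nonneg: "maxnorm n v \<ge> 0"
  unfolding maxnorm_def by (rule Max_ge) auto

lemma abs_le_maxnorm: "i < n \<Longrightarrow> \<bar>v i\<bar> \<le> maxnorm n v"
  unfolding maxnorm_def by (rule Max_ge) auto

lemma maxnorm_le_const: "M \<ge> 0 \<Longrightarrow> (\<And>i. i < n \<Longrightarrow> \<bar>v i\<bar> \<le> M) \<Longrightarrow> maxnorm n v \<le> M"
  unfolding maxnorm_def by (subst Max_le_iff) auto

section \<open>The \<open>q\<close>-norm for \<open>q \<in> [1, \<infinity>]\<close>\<close>

lemma real_of_ereal_ge_1: "1 \<le> q \<Longrightarrow> q \<noteq> \<infinity> \<Longrightarrow> real_of_ereal q \<ge> 1"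
  by (cases q) auto

lemma qnorm_infinity: "qnorm \<infinity> n v = maxnorm n v"
proof -
  have "{\<bar>v i\<bar> | i. i < n} = (\<lambda>i. \<bar>v i\<bar>) ` {..<n}" by auto
  then show ?thesis by (simp add: qnorm_def maxnorm_def)
qed

lemma qnorm_finite: "q \<noteq> \<infinity> \<Longrightarrow> qnorm q n v = pnorm (real_of_ereal q) n v"
  by (simp add: qnorm_def pnorm_def)

lemma qnorm_nonneg: "1 \<le> q \<Longrightarrow> qnorm q n v \<ge> 0"
  by (cases "q = \<infinity>") (simp_all add: qnorm_infinity qnorm_finite maxnorm_nonneg pnorm_nonneg)

lemma abs_le_qnorm: "1 \<le> q \<Longrightarrow> i < n \<Longrightarrow> \<bar>v i\<bar> \<le> qnorm q n v"
  by (cases "q = \<infinity>")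
    (simp_all add: qnorm_infinity qnorm_finite abs_le_maxnorm abs_le_pnorm real_of_ereal_ge_1)

lemma qnorm_mono:
  assumes "1 \<le> q" "\<And>i. i < n \<Longrightarrow> \<bar>u i\<bar> \<le> \<bar>v i\<bar>"
  shows "qnorm q n u \<le> qnorm q n v"
proof (cases "q = \<infinity>")
  case True
  with assms show ?thesis
    by (auto simp: qnorm_infinity intro!: maxnorm_le_const maxnorm_nonneg
        intro: order_trans abs_le_maxnorm)
qed (use assms in \<open>simp add: qnorm_finite pnorm_mono real_of_ereal_ge_1\<close>)

lemma qnorm_le_const:
  "1 \<le> q \<Longrightarrow> M \<ge> 0 \<Longrightarrow> (\<And>i. i < n \<Longrightarrow> \<bar>v i\<bar> \<le> M) \<Longrightarrow> qnorm q n v \<le> root_q (real n) q * M"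
  by (cases "q = \<infinity>") (simp_all add: qnorm_infinity qnorm_finite maxnorm_le_const
      pnorm_le_const real_of_ereal_ge_1 root_q_def)

lemma qnorm_scale: "1 \<le> q \<Longrightarrow> qnorm q n (\<lambda>i. a * v i) \<le> \<bar>a\<bar> * qnorm q n v"
proof (cases "q = \<infinity>")
  case True
  then show ?thesis
    by (auto simp: qnorm_infinity abs_mult maxnorm_nonneg abs_le_maxnorm mult_left_mono
        intro!: maxnorm_le_const)
qed (simp add: qnorm_finite pnorm_scale real_of_ereal_ge_1)

lemma qnorm_triangle: "1 \<le> q \<Longrightarrow> qnorm q n (\<lambda>i. u i + v i) \<le> qnorm q n u + qnorm q n v"
proof (cases "q = \<infinity>")
  case True
  then show ?thesis
    by (simp add: qnorm_infinity)
      (rule maxnorm_le_const, simp add: maxnorm_nonneg add_nonneg_nonneg,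
        meson abs_triangle_ineq add_mono abs_le_maxnorm order_trans)
qed (simp add: qnorm_finite pnorm_triangle real_of_ereal_ge_1)

lemma qnorm_minus: "1 \<le> q \<Longrightarrow> qnorm q n (\<lambda>i. - v i) = qnorm q n v"
  by (intro antisym qnorm_mono) auto

lemma qnorm_le_qnorm_plus_diff:
  "1 \<le> q \<Longrightarrow> qnorm q n y' \<le> qnorm q n y + qnorm q n (\<lambda>i. y i - y' i)"
  using qnorm_triangle[of q n y "\<lambda>i. - (y i - y' i)"] qnorm_minus[of q n "\<lambda>i. y i - y' i"]
  by simp

lemma sum_abs_le_qnorm: "1 \<le> q \<Longrightarrow> root_q (real n) q * (\<Sum>i<n. \<bar>x i\<bar>) \<le> real n * qnorm q n x"
proof (cases "q = \<infinity>")
  case True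
  have "(\<Sum>i<n. \<bar>x i\<bar>) \<le> (\<Sum>i<n. maxnorm n x)"
    by (rule sum_mono) (simp add: abs_le_maxnorm)
  with True show ?thesis
    by (simp add: qnorm_infinity root_q_def)
qed (simp add: qnorm_finite sum_abs_le_pnorm real_of_ereal_ge_1 root_q_def)

lemma root_q_nonneg: "root_q x q \<ge> 0"
  by (simp add: root_q_def)

lemma root_q_mult_le:
  assumes q: "1 \<le> q" and "m \<le> W" "n \<le> W"
  shows "root_q (real m) q * real n \<le> real W * root_q (real n) q"
proof (cases "q = \<infinity> \<or> n = 0")
  case True
  with assms show ?thesis by (auto simp: root_q_def)
next
  case False
  define k where "k = 1 / real_of_ereal q"
  have k: "0 < k" "k \<le> 1"
    using real_of_ereal_ge_1[OF q] False by (auto simp: k_def)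
  have "root_q (real m) q * real n = (real m powr k * real n powr (1 - k)) * real n powr k"
    using False by (simp add: root_q_def k_def mult.assoc powr_add[symmetric])
  also have "\<dots> \<le> (real W powr k * real W powr (1 - k)) * real n powr k"
    using k assms by (intro mult_right_mono mult_mono powr_mono2) auto
  also have "\<dots> = real W * root_q (real n) q"
    using False assms by (simp add: root_q_def k_def powr_add[symmetric])
  finally show ?thesis .
qed

lemma root_q_le:
  assumes q: "1 \<le> q" and "m \<le> W" "1 \<le> W"
  shows "root_q (real m) q \<le> real W"
proof (cases "q = \<infinity>")
  case False
  define k where "k = 1 / real_of_ereal q"
  have k: "0 < k" "k \<le> 1"
    using real_of_ereal_ge_1[OF q False] by (auto simp: k_def)
  have "real m powr k \<le> real W powr k"
    using k assms by (intro powr_mono2) auto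
  also have "\<dots> \<le> real W powr 1"
    using k assms by (intro powr_mono) auto
  finally show ?thesis
    using False assms by (simp add: root_q_def k_def)
qed (use assms in \<open>simp add: root_q_def\<close>)

lemma qnorm_mat_vec_le_entrywise:
  assumes q: "1 \<le> q" and E: "\<And>i j. i < m \<Longrightarrow> j < n \<Longrightarrow> \<bar>E i j\<bar> \<le> \<eta>"
    and \<eta>: "\<eta> \<ge> 0" and W: "m \<le> W" "n \<le> W"
  shows "qnorm q m (mat_vec n E x) \<le> \<eta> * real W * qnorm q n x"
proof (cases "n = 0")
  case True
  then have "qnorm q m (mat_vec n E x) \<le> root_q (real m) q * 0"
    by (intro qnorm_le_const[OF q]) (simp_all add: mat_vec_def)
  moreover have "0 \<le> \<eta> * real W * qnorm q n x"
    using \<eta> by (simp add: qnorm_nonneg[OF q])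
  ultimately show ?thesis
    by simp
next
  case False
  define S where "S = (\<Sum>j<n. \<bar>x j\<bar>)"
  have "\<bar>mat_vec n E x i\<bar> \<le> \<eta> * S" if "i < m" for i
  proof -
    have "\<bar>mat_vec n E x i\<bar> \<le> (\<Sum>j<n. \<bar>E i j\<bar> * \<bar>x j\<bar>)"
      unfolding mat_vec_def abs_mult[symmetric] by (rule sum_abs)
    also have "\<dots> \<le> (\<Sum>j<n. \<eta> * \<bar>x j\<bar>)"
      by (intro sum_mono mult_right_mono) (use E that in auto)
    finally show ?thesis by (simp add: S_def sum_distrib_left)
  qed
  then have "qnorm q m (mat_vec n E x) \<le> root_q (real m) q * (\<eta> * S)"
    by (intro qnorm_le_const q) (use \<eta> in \<open>auto simp: S_def sum_nonneg\<close>)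
  moreover have "root_q (real m) q * S \<le> real W * qnorm q n x"
  proof -
    have "(root_q (real m) q * S) * root_q (real n) q = root_q (real m) q * (root_q (real n) q * S)"
      by simp
    also have "\<dots> \<le> root_q (real m) q * (real n * qnorm q n x)"
      using sum_abs_le_qnorm[OF q, of n x] by (intro mult_left_mono root_q_nonneg) (simp add: S_def)
    also have "\<dots> = (root_q (real m) q * real n) * qnorm q n x"
      by simp
    also have "\<dots> \<le> (real W * root_q (real n) q) * qnorm q n x"
      by (intro mult_right_mono root_q_mult_le q W qnorm_nonneg)
    also have "\<dots> = (real W * qnorm q n x) * root_q (real n) q"
      by simp
    finally show ?thesis
      by (rule mult_right_le_imp_le) (use False in \<open>simp add: root_q_def\<close>)
  qed
  ultimately have "qnorm q m (mat_vec n E x) \<le> \<eta> * (real W * qnorm q n x)"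
    using \<eta> by (metis mult.left_commute mult_left_mono order_trans)
  then show ?thesis
    by (simp add: mult.assoc)
qed

lemma qnorm_mat_vec_le_opnorm:
  assumes q: "1 \<le> q" and A: "opnorm q m n A \<le> r"
  shows "qnorm q m (mat_vec n A x) \<le> r * qnorm q n x"
proof -
  define K where "K = (\<Sum>i<m. \<Sum>j<n. \<bar>A i j\<bar>)"
  have "qnorm q m (mat_vec n A y) \<le> root_q (real m) q * K" if y: "qnorm q n y \<le> 1" for y
  proof (rule qnorm_le_const[OF q])
    fix i assume i: "i < m"
    have "\<bar>mat_vec n A y i\<bar> \<le> (\<Sum>j<n. \<bar>A i j\<bar> * \<bar>y j\<bar>)"
      unfolding mat_vec_def abs_mult[symmetric] by (rule sum_abs)
    also have "\<dots> \<le> (\<Sum>j<n. \<bar>A i j\<bar>)"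
      using abs_le_qnorm[OF q, of _ n y] y by (intro sum_mono) (force intro: mult_left_le)
    also have "\<dots> \<le> K"
      unfolding K_def
      by (rule member_le_sum[where f = "\<lambda>i. \<Sum>j<n. \<bar>A i j\<bar>"]) (use i in \<open>auto intro: sum_nonneg\<close>)
    finally show "\<bar>mat_vec n A y i\<bar> \<le> K" .
  qed (simp add: K_def sum_nonneg)
  then have bdd: "bdd_above {qnorm q m (mat_vec n A x) | x. qnorm q n x \<le> 1}"
    by (intro bdd_aboveI) blast
  have unit_ball: "qnorm q m (mat_vec n A y) \<le> r" if "qnorm q n y \<le> 1" for y
  proof -
    have "qnorm q m (mat_vec n A y) \<le> opnorm q m n A"
      unfolding opnorm_def by (rule cSup_upper) (use that bdd in blast)+
    with A show ?thesis by simp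
  qed
  define t where "t = qnorm q n x"
  show ?thesis
  proof (cases "t = 0")
    case True
    then have "\<And>j. j < n \<Longrightarrow> x j = 0"
      using abs_le_qnorm[OF q, of _ n x] by (force simp: t_def)
    then have "mat_vec n A x = (\<lambda>i. 0)"
      by (simp add: mat_vec_def)
    then have "qnorm q m (mat_vec n A x) \<le> root_q (real m) q * 0"
      by (intro qnorm_le_const[OF q]) simp_all
    with True show ?thesis
      by (simp add: t_def)
  next
    case False
    then have t: "t > 0"
      using qnorm_nonneg[OF q] by (simp add: t_def order_less_le)
    define x' where "x' = (\<lambda>j. (1 / t) * x j)"
    have "qnorm q n x' \<le> 1"
      using qnorm_scale[OF q, of n "1 / t" x] t by (simp add: x'_def t_def)
    then have "qnorm q m (mat_vec n A x') \<le> r"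
      by (rule unit_ball)
    moreover have "mat_vec n A x = (\<lambda>i. t * mat_vec n A x' i)"
      using t by (simp add: mat_vec_def x'_def sum_distrib_left)
    then have "qnorm q m (mat_vec n A x) \<le> t * qnorm q m (mat_vec n A x')"
      using qnorm_scale[OF q, of m t "mat_vec n A x'"] t by simp
    ultimately show ?thesis
      using t by (simp add: t_def mult.commute order_trans)
  qed
qed

section \<open>Affine layers and their perturbation\<close>

lemma qnorm_affine_le:
  assumes q: "1 \<le> q" and "opnorm q m n A \<le> r" "qnorm q m b \<le> r"
  shows "qnorm q m (\<lambda>i. mat_vec n A y i + b i) \<le> r * qnorm q n y + r"
  using qnorm_triangle[OF q, of m "mat_vec n A y" b] qnorm_mat_vec_le_opnorm[OF q assms(2), of y]
    assms(3) by simp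

text \<open>For inputs \<open>y, y'\<close> and parameters \<open>(A', b')\<close> entrywise \<open>\<eta>\<close>-close to \<open>(A, b)\<close>, split
  \<open>(A y + b) - (A' y' + b') = A (y - y') + (A - A') y' + (b - b')\<close>.\<close>
lemma qnorm_affine_perturbation:
  assumes q: "1 \<le> q" and A: "opnorm q m n A \<le> r"
    and close_A: "\<And>i j. i < m \<Longrightarrow> j < n \<Longrightarrow> \<bar>A' i j - A i j\<bar> \<le> \<eta>"
    and close_b: "\<And>i. i < m \<Longrightarrow> \<bar>b' i - b i\<bar> \<le> \<eta>"
    and \<eta>: "\<eta> \<ge> 0" and W: "m \<le> W" "n \<le> W" "1 \<le> W"
  shows "qnorm q m (\<lambda>i. (mat_vec n A y i + b i) - (mat_vec n A' y' i + b' i))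
    \<le> r * qnorm q n (\<lambda>i. y i - y' i)
       + \<eta> * real W * (qnorm q n y + qnorm q n (\<lambda>i. y i - y' i)) + \<eta> * real W"
proof -
  have split: "(\<lambda>i. (mat_vec n A y i + b i) - (mat_vec n A' y' i + b' i)) =
      (\<lambda>i. (mat_vec n A (\<lambda>j. y j - y' j) i + mat_vec n (\<lambda>i j. A i j - A' i j) y' i) + (b i - b' i))"
    by (rule ext) (simp add: mat_vec_def algebra_simps flip: sum_subtractf sum.distrib)
  have "qnorm q m (mat_vec n (\<lambda>i j. A i j - A' i j) y') \<le> \<eta> * real W * qnorm q n y'"
    by (rule qnorm_mat_vec_le_entrywise[OF q _ \<eta> W(1,2)]) (use close_A in \<open>simp add: abs_minus_commute\<close>)
  also have "\<dots> \<le> \<eta> * real W * (qnorm q n y + qnorm q n (\<lambda>i. y i - y' i))"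
    using qnorm_le_qnorm_plus_diff[OF q, of n y' y] \<eta> by (intro mult_left_mono) auto
  finally have weights: "qnorm q m (mat_vec n (\<lambda>i j. A i j - A' i j) y')
      \<le> \<eta> * real W * (qnorm q n y + qnorm q n (\<lambda>i. y i - y' i))" .
  have "qnorm q m (\<lambda>i. b i - b' i) \<le> root_q (real m) q * \<eta>"
    by (rule qnorm_le_const[OF q \<eta>]) (use close_b in \<open>simp add: abs_minus_commute\<close>)
  also have "\<dots> \<le> \<eta> * real W"
    using root_q_le[OF q W(1,3)] \<eta> by (simp add: mult.commute mult_left_mono)
  finally have biases: "qnorm q m (\<lambda>i. b i - b' i) \<le> \<eta> * real W" .
  show ?thesis
    unfolding split
    using qnorm_triangle[OF q, of m "\<lambda>i. mat_vec n A (\<lambda>j. y j - y' j) i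
        + mat_vec n (\<lambda>i j. A i j - A' i j) y' i" "\<lambda>i. b i - b' i"]
      qnorm_triangle[OF q, of m "mat_vec n A (\<lambda>j. y j - y' j)" "mat_vec n (\<lambda>i j. A i j - A' i j) y'"]
      qnorm_mat_vec_le_opnorm[OF q A, of "\<lambda>i. y i - y' i"] weights biases
    by linarith
qed

section \<open>Networks\<close>

definition layer_map :: "(nat \<Rightarrow> nat) \<Rightarrow> params \<Rightarrow> nat \<Rightarrow> (nat \<Rightarrow> real) \<Rightarrow> (nat \<Rightarrow> real)" where
  "layer_map N \<theta> l y = (\<lambda>i. mat_vec (N (l - 1)) (fst \<theta> l) y i + snd \<theta> l i)"

lemma hidden_Suc_layer_map: "hidden N \<theta> (Suc l) x = (\<lambda>i. relu (layer_map N \<theta> (Suc l) (hidden N \<theta> l x) i))"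
  by (simp add: layer_map_def)

lemma realization_layer_map:
  "L \<ge> 1 \<Longrightarrow> realization L N \<theta> x = layer_map N \<theta> L (hidden N \<theta> (L - 1) x)"
  by (simp add: realization_def layer_map_def)

lemma finite_param_entries:
  fixes N :: "nat \<Rightarrow> nat"
  shows "finite {\<bar>fst \<theta> l i j\<bar> | l i j. l \<in> {1..L} \<and> i < N l \<and> j < N (l - 1)}"
    "finite {\<bar>snd \<theta> l i\<bar> | l i. l \<in> {1..L} \<and> i < N l}"
proof -
  have "{\<bar>fst \<theta> l i j\<bar> | l i j. l \<in> {1..L} \<and> i < N l \<and> j < N (l - 1)}
      = (\<lambda>(l, i, j). \<bar>fst \<theta> l i j\<bar>) ` (SIGMA l:{1..L}. SIGMA i:{..<N l}. {..<N (l - 1)})"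
    by force
  moreover have "finite (SIGMA l:{1..L}. SIGMA i:{..<N l}. {..<N (l - 1)})"
    by (intro finite_SigmaI) auto
  ultimately show "finite {\<bar>fst \<theta> l i j\<bar> | l i j. l \<in> {1..L} \<and> i < N l \<and> j < N (l - 1)}"
    by simp
  have "{\<bar>snd \<theta> l i\<bar> | l i. l \<in> {1..L} \<and> i < N l}
      = (\<lambda>(l, i). \<bar>snd \<theta> l i\<bar>) ` (SIGMA l:{1..L}. {..<N l})"
    by force
  then show "finite {\<bar>snd \<theta> l i\<bar> | l i. l \<in> {1..L} \<and> i < N l}"
    by simp
qed

lemma abs_weight_le_param_supnorm:
  "l \<in> {1..L} \<Longrightarrow> i < N l \<Longrightarrow> j < N (l - 1) \<Longrightarrow> \<bar>fst \<theta> l i j\<bar> \<le> param_supnorm L N \<theta>"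
  unfolding param_supnorm_def by (rule Max_ge) (use finite_param_entries in blast)+

lemma abs_bias_le_param_supnorm:
  "l \<in> {1..L} \<Longrightarrow> i < N l \<Longrightarrow> \<bar>snd \<theta> l i\<bar> \<le> param_supnorm L N \<theta>"
  unfolding param_supnorm_def by (rule Max_ge) (use finite_param_entries in blast)+

lemma qnorm_layer_map_le:
  assumes "1 \<le> q" "\<theta> \<in> ParamBall q L N r" "l \<in> {1..L}"
  shows "qnorm q (N l) (layer_map N \<theta> l y) \<le> r * qnorm q (N (l - 1)) y + r"
  using assms unfolding layer_map_def ParamBall_def by (intro qnorm_affine_le) auto

lemma qnorm_layer_map_perturbation:
  assumes q: "1 \<le> q" and \<theta>: "\<theta> \<in> ParamBall q L N r" and l: "l \<in> {1..L}"
    and close: "param_supnorm L N (param_diff \<theta>' \<theta>) \<le> \<eta>" and \<eta>: "\<eta> \<ge> 0"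
    and W: "\<forall>k\<le>L. N k \<le> W" "1 \<le> W"
  shows "qnorm q (N l) (\<lambda>i. layer_map N \<theta> l y i - layer_map N \<theta>' l y' i)
    \<le> r * qnorm q (N (l - 1)) (\<lambda>i. y i - y' i)
       + \<eta> * real W * (qnorm q (N (l - 1)) y + qnorm q (N (l - 1)) (\<lambda>i. y i - y' i)) + \<eta> * real W"
  unfolding layer_map_def
proof (rule qnorm_affine_perturbation[OF q _ _ _ \<eta>])
  show "opnorm q (N l) (N (l - 1)) (fst \<theta> l) \<le> r"
    using \<theta> l by (simp add: ParamBall_def)
  show "\<bar>fst \<theta>' l i j - fst \<theta> l i j\<bar> \<le> \<eta>" if "i < N l" "j < N (l - 1)" for i j
    using abs_weight_le_param_supnorm[of l L i N j "param_diff \<theta>' \<theta>"] l that close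
    by (simp add: param_diff_def)
  show "\<bar>snd \<theta>' l i - snd \<theta> l i\<bar> \<le> \<eta>" if "i < N l" for i
    using abs_bias_le_param_supnorm[of l L i N "param_diff \<theta>' \<theta>"] l that close
    by (simp add: param_diff_def)
qed (use W l in auto)

lemma relu_abs_le: "\<bar>relu a\<bar> \<le> \<bar>a\<bar>"
  by (simp add: relu_def)

lemma relu_abs_diff_le: "\<bar>relu a - relu b\<bar> \<le> \<bar>a - b\<bar>"
  by (simp add: relu_def max_def)

lemma activation_recursion_step:
  fixes a a' r c :: real
  assumes "a' \<le> r * a + r" "a \<le> r ^ k * (c + k) - 1" "r \<ge> 1"
  shows "a' \<le> r ^ Suc k * (c + Suc k) - 1"
proof -
  have "r * a \<le> r * (r ^ k * (c + k) - 1)"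
    using assms by (intro mult_left_mono) auto
  then have "a' \<le> r ^ Suc k * (c + k)"
    using assms by (simp add: algebra_simps)
  moreover have "r ^ Suc k \<ge> 1"
    using assms(3) by (rule one_le_power)
  ultimately show ?thesis
    by (simp add: algebra_simps)
qed

lemma error_recursion_step:
  fixes e e' a r c \<delta> :: real
  assumes e': "e' \<le> r * e + \<delta> * (a + e) + \<delta>" and a: "a \<le> r ^ k * (c + k) - 1"
    and e: "0 \<le> e" "e \<le> \<delta> * c * real k ^ 2 * (2 * r) ^ (k - 1)"
    and r: "r \<ge> 1" and c: "c \<ge> 1" and \<delta>: "0 \<le> \<delta>" "\<delta> \<le> 1"
  shows "e' \<le> \<delta> * c * real (Suc k) ^ 2 * (2 * r) ^ k"
proof -
  have "\<delta> * e \<le> r * e"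
    using \<delta> r e by (intro mult_right_mono) auto
  then have "e' \<le> 2 * r * e + \<delta> * (a + 1)"
    using e' by (simp add: algebra_simps)
  also have "\<dots> \<le> 2 * r * (\<delta> * c * real k ^ 2 * (2 * r) ^ (k - 1)) + \<delta> * (r ^ k * (c + k))"
    using e a r \<delta> by (intro add_mono mult_left_mono) auto
  also have "2 * r * (\<delta> * c * real k ^ 2 * (2 * r) ^ (k - 1)) = \<delta> * c * real k ^ 2 * (2 * r) ^ k"
    by (cases k) (simp_all add: algebra_simps)
  also have "\<delta> * (r ^ k * (c + k)) \<le> \<delta> * ((2 * r) ^ k * (c * (k + 1)))"
  proof -
    have "r ^ k \<le> (2 * r) ^ k"
      using r by (intro power_mono) auto
    moreover have "c + k \<le> c * (k + 1)"
      using c mult_right_mono[of 1 c "real k"] by (simp add: algebra_simps)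
    ultimately show ?thesis
      using r c \<delta> by (intro mult_left_mono mult_mono) auto
  qed
  also have "\<delta> * c * real k ^ 2 * (2 * r) ^ k + \<delta> * ((2 * r) ^ k * (c * (k + 1)))
      = \<delta> * c * (2 * r) ^ k * (real k ^ 2 + k + 1)"
    by (simp add: algebra_simps power2_eq_square)
  also have "\<dots> \<le> \<delta> * c * (2 * r) ^ k * real (Suc k) ^ 2"
    using \<delta> c r by (intro mult_left_mono) (auto simp: power2_eq_square algebra_simps)
  finally show ?thesis
    by (simp add: algebra_simps)
qed

lemma hidden_perturbation_bound:
  assumes q: "1 \<le> q" and \<theta>: "\<theta> \<in> ParamBall q L N r" and r: "r \<ge> 1"
    and close: "param_supnorm L N (param_diff \<theta>' \<theta>) \<le> \<eta>" and \<eta>: "\<eta> \<ge> 0"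
    and W: "\<forall>l\<le>L. N l \<le> W" "1 \<le> W" and \<delta>: "\<eta> * W \<le> 1"
    and x: "\<forall>i<N 0. \<bar>x i\<bar> \<le> D" and D: "D \<ge> 0"
  defines c: "c \<equiv> D * root_q (real (N 0)) q + 1"
  shows "k < L \<Longrightarrow> qnorm q (N k) (hidden N \<theta> k x) \<le> r ^ k * (c + k) - 1
    \<and> qnorm q (N k) (\<lambda>i. hidden N \<theta> k x i - hidden N \<theta>' k x i) \<le> \<eta> * W * c * real k ^ 2 * (2 * r) ^ (k - 1)"
proof (induction k)
  case 0
  have "qnorm q (N 0) x \<le> root_q (real (N 0)) q * D"
    by (rule qnorm_le_const) (use q x D in auto)
  moreover have "qnorm q (N 0) (\<lambda>i. x i - x i) \<le> root_q (real (N 0)) q * 0"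
    by (rule qnorm_le_const) (use q in auto)
  ultimately show ?case
    by (simp add: c mult.commute)
next
  case (Suc k)
  define y y' where "y = hidden N \<theta> k x" and "y' = hidden N \<theta>' k x"
  have l: "Suc k \<in> {1..L}" and IH: "qnorm q (N k) y \<le> r ^ k * (c + k) - 1"
    "qnorm q (N k) (\<lambda>i. y i - y' i) \<le> \<eta> * W * c * real k ^ 2 * (2 * r) ^ (k - 1)"
    using Suc by (auto simp: y_def y'_def)
  have "qnorm q (N (Suc k)) (hidden N \<theta> (Suc k) x) \<le> qnorm q (N (Suc k)) (layer_map N \<theta> (Suc k) y)"
    unfolding hidden_Suc_layer_map y_def by (intro qnorm_mono q relu_abs_le)
  also have "\<dots> \<le> r * qnorm q (N k) y + r"
    using qnorm_layer_map_le[OF q \<theta> l] by simp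
  finally have size: "qnorm q (N (Suc k)) (hidden N \<theta> (Suc k) x) \<le> r ^ Suc k * (c + Suc k) - 1"
    using activation_recursion_step IH(1) r by blast
  have "qnorm q (N (Suc k)) (\<lambda>i. hidden N \<theta> (Suc k) x i - hidden N \<theta>' (Suc k) x i)
      \<le> qnorm q (N (Suc k)) (\<lambda>i. layer_map N \<theta> (Suc k) y i - layer_map N \<theta>' (Suc k) y' i)"
    unfolding hidden_Suc_layer_map y_def y'_def by (intro qnorm_mono q relu_abs_diff_le)
  also have "\<dots> \<le> r * qnorm q (N k) (\<lambda>i. y i - y' i)
      + \<eta> * W * (qnorm q (N k) y + qnorm q (N k) (\<lambda>i. y i - y' i)) + \<eta> * W"
    using qnorm_layer_map_perturbation[OF q \<theta> l close \<eta> W] by simp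
  also have "\<dots> \<le> \<eta> * W * c * real (Suc k) ^ 2 * (2 * r) ^ (Suc k - 1)"
    using error_recursion_step[OF _ IH(1) qnorm_nonneg[OF q] IH(2) r] \<eta> \<delta> D
    by (simp add: c root_q_nonneg)
  finally show ?case
    using size by blast
qed

lemma realization_perturbation_bound:
  assumes L: "L \<ge> 1" and q: "1 \<le> q" and \<theta>: "\<theta> \<in> ParamBall q L N r" and r: "r \<ge> 1"
    and close: "param_supnorm L N (param_diff \<theta>' \<theta>) \<le> \<eta>" and \<eta>: "\<eta> \<ge> 0"
    and W: "\<forall>l\<le>L. N l \<le> W" "1 \<le> W" and \<delta>: "\<eta> * W \<le> 1"
    and x: "\<forall>i<N 0. \<bar>x i\<bar> \<le> D" and D: "D \<ge> 0"
  defines c: "c \<equiv> D * root_q (real (N 0)) q + 1"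
  shows "qnorm q (N L) (\<lambda>i. realization L N \<theta> x i - realization L N \<theta>' x i)
    \<le> \<eta> * W * (c * real L ^ 2 * (2 * r) ^ (L - 1))"
proof -
  obtain k where k: "L = Suc k"
    using L by (cases L) auto
  define y y' where "y = hidden N \<theta> k x" and "y' = hidden N \<theta>' k x"
  have IH: "qnorm q (N k) y \<le> r ^ k * (c + k) - 1"
    "qnorm q (N k) (\<lambda>i. y i - y' i) \<le> \<eta> * W * c * real k ^ 2 * (2 * r) ^ (k - 1)"
    using hidden_perturbation_bound[OF q \<theta> r close \<eta> W \<delta> x D, of k] k
    by (auto simp: y_def y'_def c)
  have "qnorm q (N L) (\<lambda>i. realization L N \<theta> x i - realization L N \<theta>' x i)
      \<le> r * qnorm q (N k) (\<lambda>i. y i - y' i)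
         + \<eta> * W * (qnorm q (N k) y + qnorm q (N k) (\<lambda>i. y i - y' i)) + \<eta> * W"
    using qnorm_layer_map_perturbation[OF q \<theta> _ close \<eta> W, of L y y'] L k
    by (simp add: realization_layer_map y_def y'_def)
  also have "\<dots> \<le> \<eta> * W * c * real (Suc k) ^ 2 * (2 * r) ^ k"
    using error_recursion_step[OF _ IH(1) qnorm_nonneg[OF q] IH(2) r] \<eta> \<delta> D
    by (simp add: c root_q_nonneg)
  finally show ?thesis
    by (simp add: k mult.assoc)
qed

theorem mainTheorem5:
  fixes D r \<epsilon> \<eta> :: real and L d :: nat and N :: "nat \<Rightarrow> nat" and q :: ereal
    and Q :: "params \<Rightarrow> params"
  assumes "D > 0" and "L \<ge> 1" and "N 0 = d"
    and "1 \<le> q"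
    and "r \<ge> 1"
    and "\<epsilon> > 0"
    and "\<epsilon> < (D * root_q (real d) q + 1) * real L ^ 2 * (2 * r) ^ (L - 1)"
    and "\<eta> > 0"
    and "\<eta> \<le> \<epsilon> / ((D * root_q (real d) q + 1) * real (Max (N ` {0..L})) * real L ^ 2
                     * (2 * r) ^ (L - 1))"
    and "\<forall>\<theta> \<in> Params L N. Q \<theta> \<in> Params L N"
    and "\<forall>\<theta> \<in> ParamBall q L N r. param_supnorm L N (param_diff (Q \<theta>) \<theta>) \<le> \<eta>"
  shows "\<forall>\<theta> \<in> ParamBall q L N r. \<forall>x. (\<forall>i<d. \<bar>x i\<bar> \<le> D) \<longrightarrow>
           qnorm q (N L) (\<lambda>i. realization L N \<theta> x i - realization L N (Q \<theta>) x i) \<le> \<epsilon>"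
proof (intro ballI allI impI)
  fix \<theta> x
  assume \<theta>: "\<theta> \<in> ParamBall q L N r" and x: "\<forall>i<d. \<bar>x i\<bar> \<le> D"
  define W where "W = Max (N ` {0..L})"
  define c where "c = D * root_q (real d) q + 1"
  define K where "K = c * real L ^ 2 * (2 * r) ^ (L - 1)"
  have K: "K > 0"
    using assms(1,2,5) by (simp add: K_def c_def root_q_nonneg add_nonneg_pos)
  have W_bound: "\<forall>l\<le>L. N l \<le> W"
    by (simp add: W_def)
  have "\<eta> \<le> \<epsilon> / (real W * K)"
    using assms(9) by (simp add: W_def K_def c_def ac_simps)
  moreover from this have W: "1 \<le> W"
    using assms(8) by (cases "W = 0") auto
  ultimately have \<eta>W: "\<eta> * W * K \<le> \<epsilon>"
    using K by (simp add: pos_le_divide_eq mult.assoc)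
  have "\<eta> * W * K < 1 * K"
    using \<eta>W assms(7) by (simp add: K_def c_def)
  then have "\<eta> * W \<le> 1"
    using K by simp
  with realization_perturbation_bound[OF assms(2,4) \<theta> assms(5) _ _ W_bound W]
  have "qnorm q (N L) (\<lambda>i. realization L N \<theta> x i - realization L N (Q \<theta>) x i) \<le> \<eta> * W * K"
    using assms(1,3,8,11) \<theta> x unfolding K_def c_def by simp
  with \<eta>W show "qnorm q (N L) (\<lambda>i. realization L N \<theta> x i - realization L N (Q \<theta>) x i) \<le> \<epsilon>"
    by linarith
qed

end
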